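(* Let $\mathcal{G}$ be a connected hypergraph with spectral radius $\rho$ and principal eigenvector $X=(x_v)$, let $k\ge2$, and let $e=\{u,v_1,v_2,\dots,v_{k-1}\}$ be a pendant edge of $\mathcal{G}$ with $\deg_{\mathcal{G}}(u)\geq 2$. Then $$x_{v_1}=x_{v_2}=\cdots=x_{v_{k-1}}=\frac{x_u}{(k-1)\rho-(k-2)}<x_u.$$
   Context: A hypergraph has a finite vertex set and distinct edges (subsets with at least two vertices); $\deg_{\mathcal{G}}(v)$ is the number of edges containing $v$; a pendant edge is an edge in which at most one vertex has degree greater than one. The adjacency matrix has $(\mathcal{A}_{\mathcal{G}})_{ij}=\sum_{e\ni i,j}\frac{1}{|e|-1}$ for $i\ne j$ and $0$ on the diagonal; $\rho$ is its spectral radius. For connected $\mathcal{G}$ the principal eigenvector is the unique positive eigenvector of $\mathcal{A}_{\mathcal{G}}$ for $\rho$ with unit Euclidean norm. *)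

theory Defs
  imports Complex_Main
begin

definition hypergraph :: "'a set \<Rightarrow> 'a set set \<Rightarrow> bool" where
  "hypergraph V E \<longleftrightarrow> finite V \<and> (\<forall>e\<in>E. e \<subseteq> V \<and> card e \<ge> 2)"

definition hdeg :: "'a set set \<Rightarrow> 'a \<Rightarrow> nat" where
  "hdeg E v = card {e\<in>E. v \<in> e}"

definition hconnected :: "'a set \<Rightarrow> 'a set set \<Rightarrow> bool" where
  "hconnected V E \<longleftrightarrow>
     (\<forall>x\<in>V. \<forall>y\<in>V. (x, y) \<in> {(a, b). \<exists>e\<in>E. a \<in> e \<and> b \<in> e}\<^sup>*)"

definition pendant_edge :: "'a set set \<Rightarrow> 'a set \<Rightarrow> bool" where
  "pendant_edge E e \<longleftrightarrow> e \<in> E \<and> card {w\<in>e. hdeg E w > 1} \<le> 1"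

definition hadj :: "'a set set \<Rightarrow> 'a \<Rightarrow> 'a \<Rightarrow> real" where
  "hadj E i j = (if i = j then 0
      else (\<Sum>e\<in>{e\<in>E. i \<in> e \<and> j \<in> e}. 1 / (real (card e) - 1)))"

definition heigenvalue :: "'a set \<Rightarrow> 'a set set \<Rightarrow> complex \<Rightarrow> bool" where
  "heigenvalue V E mu \<longleftrightarrow> (\<exists>x :: 'a \<Rightarrow> complex. (\<exists>v\<in>V. x v \<noteq> 0) \<and>
      (\<forall>i\<in>V. (\<Sum>j\<in>V. complex_of_real (hadj E i j) * x j) = mu * x i))"

definition hspectral_radius :: "'a set \<Rightarrow> 'a set set \<Rightarrow> real" where
  "hspectral_radius V E = Sup {cmod mu | mu. heigenvalue V E mu}"

definition principal_eigenvector :: "'a set \<Rightarrow> 'a set set \<Rightarrow> ('a \<Rightarrow> real) \<Rightarrow> bool" where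
  "principal_eigenvector V E x \<longleftrightarrow>
     (\<forall>v\<in>V. x v > 0) \<and>
     (\<forall>i\<in>V. (\<Sum>j\<in>V. hadj E i j * x j) = hspectral_radius V E * x i) \<and>
     (\<Sum>v\<in>V. (x v)\<^sup>2) = 1"

end

theory Submission
  imports Defs
begin

text \<open>Every vertex \<open>v \<noteq> u\<close> of the pendant edge \<open>e\<close> lies in \<open>e\<close> only, so its eigen-equation
  reads \<open>\<rho> x\<^sub>v = (\<Sum>\<^bsub>j\<in>e\<^esub> x\<^sub>j - x\<^sub>v) / (k - 1)\<close>. Hence all these coordinates share a common value
  \<open>y\<close>, and substituting \<open>\<Sum>\<^bsub>j\<in>e\<^esub> x\<^sub>j = x\<^sub>u + (k - 1) y\<close> gives \<open>((k - 1) \<rho> - (k - 2)) y = x\<^sub>u\<close>.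
  Since \<open>u\<close> also lies in a second edge, its eigen-equation gives \<open>\<rho> x\<^sub>u > y\<close>, which forces
  \<open>\<rho> > 1\<close> and so \<open>y < x\<^sub>u\<close>.\<close>

lemma hypergraph_finite_edges: "hypergraph V E \<Longrightarrow> finite E"
  unfolding hypergraph_def by (meson Pow_iff finite_Pow_iff finite_subset subsetI)

lemma hypergraph_edge:
  assumes "hypergraph V E" "e \<in> E"
  shows "e \<subseteq> V" "finite e" "card e \<ge> 2"
  using assms unfolding hypergraph_def by (auto intro: finite_subset)

lemma hadj_sym: "hadj E i j = hadj E j i"
  unfolding hadj_def by (simp add: conj_commute)

lemma hadj_nonneg:
  assumes "hypergraph V E" shows "0 \<le> hadj E i j"
  using assms unfolding hadj_def hypergraph_def by (auto intro!: sum_nonneg)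

lemma hadj_pos:
  assumes "hypergraph V E" "f \<in> E" "i \<in> f" "j \<in> f" "i \<noteq> j"
  shows "0 < hadj E i j"
proof -
  have "0 < 1 / (real (card g) - 1)" if "g \<in> E" for g
    using assms(1) that unfolding hypergraph_def by force
  moreover have "f \<in> {g\<in>E. i \<in> g \<and> j \<in> g}" using assms by auto
  ultimately show ?thesis
    unfolding hadj_def using assms hypergraph_finite_edges[OF assms(1)]
    by (auto intro!: sum_pos)
qed

lemma pendant_edge_only_edge:
  assumes "hypergraph V E" "pendant_edge E e" "u \<in> e" "hdeg E u \<ge> 2" "v \<in> e - {u}"
  shows "{f\<in>E. v \<in> f} = {e}"
proof -
  have "e \<in> E" using assms(2) unfolding pendant_edge_def by simp
  have "finite e" using assms(1) \<open>e \<in> E\<close> unfolding hypergraph_def by (meson finite_subset)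
  have "card {w\<in>e. hdeg E w > 1} \<le> 1" using assms(2) unfolding pendant_edge_def by simp
  moreover have "u \<in> {w\<in>e. hdeg E w > 1}" using assms(3,4) by simp
  ultimately have "\<not> hdeg E v > 1"
    using assms(5) \<open>finite e\<close> card_le_Suc0_iff_eq[of "{w\<in>e. hdeg E w > 1}"] by auto
  then have "card {f\<in>E. v \<in> f} \<le> 1" unfolding hdeg_def by simp
  moreover have "e \<in> {f\<in>E. v \<in> f}" using \<open>e \<in> E\<close> assms(5) by simp
  ultimately show ?thesis
    using hypergraph_finite_edges[OF assms(1)] card_le_Suc0_iff_eq[of "{f\<in>E. v \<in> f}"] by auto
qed

lemma hadj_single_edge:
  assumes "{f\<in>E. v \<in> f} = {e}"
  shows "hadj E v j = (if j \<in> e - {v} then 1 / (real (card e) - 1) else 0)"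
proof -
  have "{f\<in>E. v \<in> f \<and> j \<in> f} = (if j \<in> e then {e} else {})" using assms by auto
  then show ?thesis unfolding hadj_def by auto
qed

lemma eigen_equation_single_edge:
  assumes "finite V" "e \<subseteq> V" "v \<in> e" "card e \<ge> 2" "{f\<in>E. v \<in> f} = {e}"
    and "(\<Sum>j\<in>V. hadj E v j * x j) = \<rho> * x v"
  shows "x v * ((real (card e) - 1) * \<rho> + 1) = (\<Sum>j\<in>e. x j)"
proof -
  have "finite e" using assms(1,2) by (rule finite_subset[rotated])
  have "\<rho> * x v = (\<Sum>j\<in>V. if j \<in> e - {v} then x j / (real (card e) - 1) else 0)"
    unfolding assms(6)[symmetric] hadj_single_edge[OF assms(5)] by (rule sum.cong) auto
  also have "\<dots> = (\<Sum>j\<in>e - {v}. x j) / (real (card e) - 1)"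
    using assms(1,2) by (simp add: sum.If_cases sum_divide_distrib Int_absorb1 set_diff_eq
        subset_iff)
  also have "\<dots> = ((\<Sum>j\<in>e. x j) - x v) / (real (card e) - 1)"
    using \<open>finite e\<close> assms(3) by (simp add: sum_diff1)
  finally show ?thesis using assms(4) by (simp add: field_simps)
qed

lemma pendant_edge_other_neighbour:
  assumes "hypergraph V E" "pendant_edge E e" "u \<in> e" "hdeg E u \<ge> 2"
  obtains w where "w \<in> V - e" "0 < hadj E u w"
proof -
  have "\<not> {f\<in>E. u \<in> f} \<subseteq> {e}"
    using assms(4) card_mono[of "{e}" "{f\<in>E. u \<in> f}"] unfolding hdeg_def by auto
  then obtain f where f: "f \<in> E" "u \<in> f" "f \<noteq> e" by auto
  have "f \<subseteq> V" "\<not> f \<subseteq> {u}"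
    using assms(1) f card_mono[of "{u}" f] unfolding hypergraph_def by auto
  then obtain w where w: "w \<in> f" "w \<in> V" "w \<noteq> u" by auto
  have "w \<notin> e"
    using pendant_edge_only_edge[OF assms, of w] f w by auto
  then show ?thesis
    using that hadj_pos[OF assms(1) f(1,2) w(1)] w by auto
qed

lemma pendant_ratio_solution:
  fixes k \<rho> y z :: real
  assumes "1 < k" "0 < y" "0 < z" "y * ((k - 1) * \<rho> - (k - 2)) = z" "y < \<rho> * z"
  shows "y = z / ((k - 1) * \<rho> - (k - 2)) \<and> y < z"
proof -
  define D where "D = (k - 1) * \<rho> - (k - 2)"
  have "0 < D" using assms(2-4) unfolding D_def by (metis zero_less_mult_pos)
  have "y * 1 < y * (\<rho> * D)"
    using assms(4,5) unfolding D_def by (simp add: mult.left_commute)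
  then have "1 < \<rho> * D" using assms(2) by (simp only: mult_less_cancel_left_pos)
  have "1 < \<rho>"
  proof (rule ccontr)
    assume "\<not> 1 < \<rho>"
    then have "(k - 1) * \<rho> \<le> (k - 1) * 1" using assms(1) by (intro mult_left_mono) auto
    then have "D \<le> 1" unfolding D_def by simp
    moreover have "\<rho> * D \<le> D"
      using mult_right_mono[of \<rho> 1 D] \<open>\<not> 1 < \<rho>\<close> \<open>0 < D\<close> by simp
    ultimately show False using \<open>1 < \<rho> * D\<close> by simp
  qed
  then have "(k - 1) * 1 < (k - 1) * \<rho>" using assms(1) by (intro mult_strict_left_mono) auto
  then have "y * 1 < y * D" using assms(2) unfolding D_def by simp
  then show ?thesis using assms(4) \<open>0 < D\<close> unfolding D_def[symmetric] by auto
qed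

context
  fixes V :: "'a set" and E :: "'a set set" and x :: "'a \<Rightarrow> real" and \<rho> :: real
    and e :: "'a set" and u :: 'a
  assumes hypergraph: "hypergraph V E"
    and eigenvector: "\<forall>i\<in>V. (\<Sum>j\<in>V. hadj E i j * x j) = \<rho> * x i"
    and positive: "\<forall>v\<in>V. 0 < x v"
    and pendant: "pendant_edge E e" "u \<in> e" "hdeg E u \<ge> 2"
begin

lemmas e_is_edge =
  hypergraph_edge[OF hypergraph pendant(1)[unfolded pendant_edge_def, THEN conjunct1]]

lemma pendant_row_equation:
  assumes "v \<in> e - {u}"
  shows "x v * ((real (card e) - 1) * \<rho> + 1) = (\<Sum>j\<in>e. x j)"
proof (rule eigen_equation_single_edge)
  show "finite V" using hypergraph unfolding hypergraph_def by simp
  show "{f\<in>E. v \<in> f} = {e}" by (rule pendant_edge_only_edge[OF hypergraph pendant assms])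
  show "(\<Sum>j\<in>V. hadj E v j * x j) = \<rho> * x v"
    using eigenvector assms e_is_edge(1) by auto
qed (use assms e_is_edge in auto)

lemma pendant_coordinates_equal:
  assumes "v \<in> e - {u}" "w \<in> e - {u}"
  shows "x w = x v"
proof -
  have "0 < (\<Sum>j\<in>e. x j)"
    using pendant(2) e_is_edge positive by (intro sum_pos) auto
  then show ?thesis
    using pendant_row_equation[OF assms(1)] pendant_row_equation[OF assms(2)]
    by (metis mult_cancel_right mult_zero_left less_irrefl)
qed

lemma pendant_eigenvector_equation:
  assumes "v \<in> e - {u}"
  shows "x v * ((real (card e) - 1) * \<rho> - (real (card e) - 2)) = x u"
proof -
  have "(\<Sum>j\<in>e. x j) = x u + (\<Sum>j\<in>e - {u}. x v)"
    using pendant(2) e_is_edge(2) pendant_coordinates_equal[OF assms]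
    by (simp add: sum.remove)
  also have "\<dots> = x u + (real (card e) - 1) * x v"
    using pendant(2) e_is_edge(2,3) by (simp add: of_nat_diff)
  finally show ?thesis using pendant_row_equation[OF assms] by (simp add: algebra_simps)
qed

lemma pendant_eigenvalue_bound:
  assumes "v \<in> e - {u}"
  shows "x v < \<rho> * x u"
proof -
  obtain w where w: "w \<in> V - e" "0 < hadj E u w"
    using pendant_edge_other_neighbour[OF hypergraph pendant] .
  have "hadj E u j = 1 / (real (card e) - 1)" if "j \<in> e - {u}" for j
    using hadj_single_edge[OF pendant_edge_only_edge[OF hypergraph pendant that], of u]
      hadj_sym[of E u j] pendant(2) that by auto
  then have "(\<Sum>j\<in>e - {u}. hadj E u j * x j) = (\<Sum>j\<in>e - {u}. x v / (real (card e) - 1))"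
    using pendant_coordinates_equal[OF assms] by (intro sum.cong) auto
  also have "\<dots> = x v"
    using pendant(2) e_is_edge(2,3) by simp
  finally have "x v < hadj E u w * x w + (\<Sum>j\<in>e - {u}. hadj E u j * x j)"
    using w positive by simp
  also have "\<dots> = (\<Sum>j\<in>insert w (e - {u}). hadj E u j * x j)"
    using w e_is_edge(2) by simp
  also have "\<dots> \<le> (\<Sum>j\<in>V. hadj E u j * x j)"
  proof (rule sum_mono2)
    show "finite V" using hypergraph unfolding hypergraph_def by simp
    show "insert w (e - {u}) \<subseteq> V" using w e_is_edge(1) by auto
    show "0 \<le> hadj E u j * x j" if "j \<in> V - insert w (e - {u})" for j
      using that positive hadj_nonneg[OF hypergraph] by (simp add: less_imp_le)
  qed
  also have "\<dots> = \<rho> * x u"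
    using eigenvector pendant(2) e_is_edge(1) by auto
  finally show ?thesis .
qed

end

theorem lemma3p7:
  fixes V :: "'a set" and E :: "'a set set" and x :: "'a \<Rightarrow> real"
    and e :: "'a set" and u :: 'a and k :: nat
  assumes "hypergraph V E" and "hconnected V E"
    and "principal_eigenvector V E x"
    and "k \<ge> 2" and "pendant_edge E e" and "u \<in> e" and "card e = k"
    and "hdeg E u \<ge> 2"
  shows "\<forall>v\<in>e - {u}.
           x v = x u / ((real k - 1) * hspectral_radius V E - (real k - 2)) \<and> x v < x u"
proof
  fix v assume v: "v \<in> e - {u}"
  have eigenvector: "\<forall>i\<in>V. (\<Sum>j\<in>V. hadj E i j * x j) = hspectral_radius V E * x i"
    and positive: "\<forall>v\<in>V. 0 < x v"
    using assms(3) unfolding principal_eigenvector_def by auto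
  note pendant_setting = assms(1) eigenvector positive assms(5,6,8)
  have "e \<subseteq> V" using assms(1,5) hypergraph_edge(1) unfolding pendant_edge_def by blast
  show "x v = x u / ((real k - 1) * hspectral_radius V E - (real k - 2)) \<and> x v < x u"
  proof (rule pendant_ratio_solution)
    show "1 < real k" using assms(4) by simp
    show "0 < x v" "0 < x u" using positive v assms(6) \<open>e \<subseteq> V\<close> by auto
    show "x v * ((real k - 1) * hspectral_radius V E - (real k - 2)) = x u"
      using pendant_eigenvector_equation[OF pendant_setting v] assms(7) by simp
    show "x v < hspectral_radius V E * x u"
      by (rule pendant_eigenvalue_bound[OF pendant_setting v])
  qed
qed

end
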